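(* Let $\mathcal X$ be a finite set. For every $\varepsilon>0$ there exist $\xi>0$ and $n_0>0$ such that for every $n>n_0$ the following holds. Suppose $\mu\in\mathcal P(\mathcal X^n)$ is $\xi$-homogeneous with respect to partitions $(\vec V,\vec S)$ of $[n]$ and $\mathcal X^n$, and $j\in[\#\vec S]$ is such that $\mu(S_j)>0$ and $\mu[\,\cdot\,|S_j]$ is $\xi$-regular with respect to $\vec V$. Then for every $\sigma\in S_j$, $$\sum_{i\in[\#\vec V]}\sum_{x\in V_i}\left\|\mu_x[\,\cdot\,|S_j]-\sigma[\,\cdot\,|V_i]\right\|_{TV}<\varepsilon n.$$
   Context: Notation: $\mathcal P(\mathcal X^n)$ is the set of probability measures on $\mathcal X^n$. For $\mu\in\mathcal P(\mathcal X^n)$, $\langle\cdot\rangle_\mu$ denotes expectation over $\boldsymbol\sigma\sim\mu$; $\mu_x$ is the marginal of coordinate $x$, and $\mu[\cdot|S]$, $\mu_x[\cdot|S]$ are $\mu$ and its marginal conditioned on $S\subset\mathcal X^n$. For $\emptyset\neq U\subset[n]$ and $\sigma\in\mathcal X^n$, $\sigma[\cdot|U]\in\mathcal P(\mathcal X)$ is $\sigma[\omega|U]=|U|^{-1}\sum_{u\in U}\mathbf 1\{\sigma(u)=\omega\}$. For a partition $\vec V=(V_1,\ldots,V_l)$, $\#\vec V=l$ is its size. Regularity: $\mu$ is $\varepsilon$-regular on $U\subset[n]$ if for every $S\subset U$ with $|S|\geq\varepsilon|U|$, $\langle\|\boldsymbol\sigma[\cdot|S]-\boldsymbol\sigma[\cdot|U]\|_{TV}\rangle_\mu<\varepsilon$.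 $\mu$ is $\varepsilon$-regular with respect to a partition $\vec V$ of $[n]$ if there is $J\subset[\#\vec V]$ with $\sum_{i\in J}|V_i|\geq(1-\varepsilon)n$ and $\mu$ is $\varepsilon$-regular on $V_i$ for all $i\in J$. Homogeneity: for partitions $\vec V$ of $[n]$ and $\vec S=(S_1,\ldots,S_{\#\vec S})$ of $\mathcal X^n$, $\mu$ is $\varepsilon$-homogeneous w.r.t. $(\vec V,\vec S)$ if there is $I\subset[\#\vec S]$ with: (HM1) $\mu(S_i)>0$ for all $i\in I$ and $\sum_{i\in I}\mu(S_i)\geq1-\varepsilon$; (HM2) for all $i\in[\#\vec S]$, $j\in[\#\vec V]$, $\max_{\sigma,\sigma'\in S_i}\|\sigma[\cdot|V_j]-\sigma'[\cdot|V_j]\|_{TV}<\varepsilon$; (HM3) for all $i\in I$, $\mu[\cdot|S_i]$ is $\varepsilon$-regular w.r.t. $\vec V$; (HM4) $\mu$ is $\varepsilon$-regular w.r.t. $\vec V$. *)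

theory Defs
  imports Complex_Main "HOL-Library.FuncSet"
begin

text \<open>Configurations: elements of X^n, represented as extensional functions
  on [n] = {0..<n} with values in the finite type 'a (playing the role of X).\<close>
definition configs :: "nat \<Rightarrow> (nat \<Rightarrow> 'a::finite) set" where
  "configs n = PiE {0..<n} (\<lambda>_. UNIV)"

definition is_prob :: "nat \<Rightarrow> ((nat \<Rightarrow> 'a::finite) \<Rightarrow> real) \<Rightarrow> bool" where
  "is_prob n \<mu> \<longleftrightarrow> (\<forall>\<sigma>\<in>configs n. \<mu> \<sigma> \<ge> 0) \<and> (\<Sum>\<sigma>\<in>configs n. \<mu> \<sigma>) = 1"

definition meas :: "nat \<Rightarrow> ((nat \<Rightarrow> 'a::finite) \<Rightarrow> real) \<Rightarrow> (nat \<Rightarrow> 'a) set \<Rightarrow> real" where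
  "meas n \<mu> A = (\<Sum>\<sigma>\<in>configs n \<inter> A. \<mu> \<sigma>)"

definition expect :: "nat \<Rightarrow> ((nat \<Rightarrow> 'a::finite) \<Rightarrow> real) \<Rightarrow> ((nat \<Rightarrow> 'a) \<Rightarrow> real) \<Rightarrow> real" where
  "expect n \<mu> f = (\<Sum>\<sigma>\<in>configs n. \<mu> \<sigma> * f \<sigma>)"

definition cond :: "nat \<Rightarrow> ((nat \<Rightarrow> 'a::finite) \<Rightarrow> real) \<Rightarrow> (nat \<Rightarrow> 'a) set \<Rightarrow> (nat \<Rightarrow> 'a) \<Rightarrow> real" where
  "cond n \<mu> S \<sigma> = (if \<sigma> \<in> S then \<mu> \<sigma> / meas n \<mu> S else 0)"

definition marginal :: "nat \<Rightarrow> ((nat \<Rightarrow> 'a::finite) \<Rightarrow> real) \<Rightarrow> nat \<Rightarrow> 'a \<Rightarrow> real" where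
  "marginal n \<mu> x \<omega> = meas n \<mu> {\<sigma>. \<sigma> x = \<omega>}"

definition emp :: "(nat \<Rightarrow> 'a::finite) \<Rightarrow> nat set \<Rightarrow> 'a \<Rightarrow> real" where
  "emp \<sigma> U \<omega> = real (card {u\<in>U. \<sigma> u = \<omega>}) / real (card U)"

definition tv :: "('a::finite \<Rightarrow> real) \<Rightarrow> ('a \<Rightarrow> real) \<Rightarrow> real" where
  "tv p q = (\<Sum>\<omega>\<in>UNIV. \<bar>p \<omega> - q \<omega>\<bar>) / 2"

definition is_partition :: "'b set \<Rightarrow> 'b set list \<Rightarrow> bool" where
  "is_partition A P \<longleftrightarrow>
     (\<forall>i<length P. P ! i \<noteq> {}) \<and>
     (\<forall>i<length P. \<forall>j<length P. i \<noteq> j \<longrightarrow> P ! i \<inter> P ! j = {}) \<and>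
     (\<Union>i<length P. P ! i) = A"

definition regular_on :: "nat \<Rightarrow> ((nat \<Rightarrow> 'a::finite) \<Rightarrow> real) \<Rightarrow> real \<Rightarrow> nat set \<Rightarrow> bool" where
  "regular_on n \<mu> \<epsilon> U \<longleftrightarrow>
     (\<forall>S\<subseteq>U. real (card S) \<ge> \<epsilon> * real (card U) \<longrightarrow>
        expect n \<mu> (\<lambda>\<sigma>. tv (emp \<sigma> S) (emp \<sigma> U)) < \<epsilon>)"

definition regular_wrt :: "nat \<Rightarrow> ((nat \<Rightarrow> 'a::finite) \<Rightarrow> real) \<Rightarrow> real \<Rightarrow> nat set list \<Rightarrow> bool" where
  "regular_wrt n \<mu> \<epsilon> V \<longleftrightarrow>
     (\<exists>J\<subseteq>{..<length V}. (\<Sum>i\<in>J. real (card (V ! i))) \<ge> (1 - \<epsilon>) * real n \<and>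
        (\<forall>i\<in>J. regular_on n \<mu> \<epsilon> (V ! i)))"

definition homogeneous :: "nat \<Rightarrow> ((nat \<Rightarrow> 'a::finite) \<Rightarrow> real) \<Rightarrow> real \<Rightarrow> nat set list
    \<Rightarrow> (nat \<Rightarrow> 'a) set list \<Rightarrow> bool" where
  "homogeneous n \<mu> \<epsilon> V S \<longleftrightarrow>
     (\<exists>I\<subseteq>{..<length S}.
        (\<forall>i\<in>I. meas n \<mu> (S ! i) > 0) \<and> (\<Sum>i\<in>I. meas n \<mu> (S ! i)) \<ge> 1 - \<epsilon> \<and>
        (\<forall>i<length S. \<forall>j<length V. \<forall>\<sigma>\<in>S ! i. \<forall>\<sigma>'\<in>S ! i.
            tv (emp \<sigma> (V ! j)) (emp \<sigma>' (V ! j)) < \<epsilon>) \<and>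
        (\<forall>i\<in>I. regular_wrt n (cond n \<mu> (S ! i)) \<epsilon> V) \<and>
        regular_wrt n \<mu> \<epsilon> V)"

end

theory Submission
  imports Defs
begin

text \<open>
  Let \<open>\<nu> = \<mu>[\<cdot>|S\<^sub>j]\<close> and fix a block \<open>U\<close> on which \<open>\<nu>\<close> is \<open>\<xi>\<close>-regular. By (HM2), \<open>\<nu>\<close>-almost every
  configuration has its empirical distribution on \<open>U\<close> within \<open>\<xi>\<close> of \<open>p = \<sigma>[\<cdot>|U]\<close>. For
  \<open>A \<subseteq> U\<close> with \<open>|A| \<ge> \<xi>|U|\<close>, the sum of \<open>\<nu>\<^sub>x(\<omega>) - p(\<omega>)\<close> over \<open>x \<in> A\<close> is \<open>|A|\<close> times the
  \<open>\<nu>\<close>-expectation of \<open>\<tau>[\<omega>|A] - p(\<omega>)\<close>, which regularity and (HM2) make \<open>O(\<xi>)\<close>; smaller \<open>A\<close>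
  contribute at most \<open>\<xi>|U|\<close> anyway. Taking for \<open>A\<close> the coordinates where \<open>\<nu>\<^sub>x(\<omega>) \<ge> p(\<omega>)\<close>
  and its complement bounds \<open>\<Sum>\<^sub>x |\<nu>\<^sub>x(\<omega>) - p(\<omega>)|\<close>, hence the total variation sum, by
  \<open>O(\<xi>|U|)\<close>. Irregular blocks cover at most \<open>\<xi>n\<close> coordinates, each contributing at most 1.
\<close>

lemma finite_configs: "finite (configs n :: (nat \<Rightarrow> 'a::finite) set)"
  unfolding configs_def by (simp add: finite_PiE)

lemma expect_diff: "expect n \<mu> (\<lambda>\<sigma>. f \<sigma> - g \<sigma>) = expect n \<mu> f - expect n \<mu> g"
  unfolding expect_def by (simp add: right_diff_distrib sum_subtractf)

lemma expect_add: "expect n \<mu> (\<lambda>\<sigma>. f \<sigma> + g \<sigma>) = expect n \<mu> f + expect n \<mu> g"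
  unfolding expect_def by (simp add: distrib_left sum.distrib)

lemma expect_cmult: "expect n \<mu> (\<lambda>\<sigma>. c * f \<sigma>) = c * expect n \<mu> f"
  unfolding expect_def by (simp add: sum_distrib_left mult.left_commute)

lemma expect_sum:
  "expect n \<mu> (\<lambda>\<sigma>. \<Sum>x\<in>A. f x \<sigma>) = (\<Sum>x\<in>A. expect n \<mu> (f x))"
  unfolding expect_def by (simp add: sum_distrib_left sum.swap[of _ A])

lemma expect_const: "is_prob n \<mu> \<Longrightarrow> expect n \<mu> (\<lambda>_. c) = c"
  unfolding expect_def is_prob_def by (simp flip: sum_distrib_right)

lemma expect_mono:
  assumes "is_prob n \<mu>" "\<And>\<sigma>. \<sigma> \<in> configs n \<Longrightarrow> f \<sigma> \<le> g \<sigma>"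
  shows "expect n \<mu> f \<le> expect n \<mu> g"
  unfolding expect_def
  using assms by (intro sum_mono mult_left_mono) (auto simp: is_prob_def)

lemma abs_expect_le:
  fixes \<mu> :: "(nat \<Rightarrow> 'a::finite) \<Rightarrow> real"
  assumes "is_prob n \<mu>" "\<And>\<sigma>. \<sigma> \<in> configs n \<Longrightarrow> \<mu> \<sigma> \<noteq> 0 \<Longrightarrow> \<bar>f \<sigma>\<bar> \<le> g \<sigma>"
  shows "\<bar>expect n \<mu> f\<bar> \<le> expect n \<mu> g"
proof -
  have "\<bar>expect n \<mu> f\<bar> \<le> (\<Sum>\<sigma>\<in>configs n. \<bar>\<mu> \<sigma> * f \<sigma>\<bar>)"
    unfolding expect_def by (rule sum_abs)
  also have "\<dots> \<le> expect n \<mu> g"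
    unfolding expect_def
  proof (rule sum_mono)
    fix \<sigma> :: "nat \<Rightarrow> 'a" assume "\<sigma> \<in> configs n"
    then show "\<bar>\<mu> \<sigma> * f \<sigma>\<bar> \<le> \<mu> \<sigma> * g \<sigma>"
      using assms by (cases "\<mu> \<sigma> = 0") (auto simp: is_prob_def abs_mult intro: mult_left_mono)
  qed
  finally show ?thesis .
qed

lemma marginal_eq_expect:
  "marginal n \<mu> x \<omega> = expect n \<mu> (\<lambda>\<sigma>. if \<sigma> x = \<omega> then 1 else 0)"
  unfolding marginal_def meas_def expect_def
  by (simp add: sum.inter_restrict[OF finite_configs] if_distrib cong: if_cong)

lemma marginal_nonneg: "is_prob n \<mu> \<Longrightarrow> 0 \<le> marginal n \<mu> x \<omega>"
  using expect_mono[of n \<mu> "\<lambda>_. 0"] by (simp add: marginal_eq_expect expect_const)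

lemma marginal_le_1: "is_prob n \<mu> \<Longrightarrow> marginal n \<mu> x \<omega> \<le> 1"
  using expect_mono[of n \<mu> _ "\<lambda>_. 1"] by (simp add: marginal_eq_expect expect_const)

lemma sum_marginal_eq_1: "is_prob n \<mu> \<Longrightarrow> (\<Sum>\<omega>\<in>UNIV. marginal n \<mu> x \<omega>) = 1"
  by (simp add: marginal_eq_expect flip: expect_sum) (simp add: expect_const)

lemma card_filter_eq_sum:
  "finite A \<Longrightarrow> real (card {x\<in>A. P x}) = (\<Sum>x\<in>A. if P x then 1 else 0)"
  by (simp add: sum.If_cases Int_def conj_commute)

lemma sum_marginal_eq_expect_count:
  "finite A \<Longrightarrow>
    (\<Sum>x\<in>A. marginal n \<mu> x \<omega>) = expect n \<mu> (\<lambda>\<sigma>. real (card {x\<in>A. \<sigma> x = \<omega>}))"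
  by (simp add: marginal_eq_expect card_filter_eq_sum expect_sum)

lemma emp_nonneg: "0 \<le> emp \<sigma> U \<omega>"
  unfolding emp_def by simp

lemma sum_emp_eq_1:
  assumes "finite U" "U \<noteq> {}"
  shows "(\<Sum>\<omega>\<in>UNIV. emp \<sigma> U \<omega>) = 1"
proof -
  have "(\<Sum>\<omega>\<in>UNIV. real (card {u\<in>U. \<sigma> u = \<omega>}))
      = (\<Sum>u\<in>U. \<Sum>\<omega>\<in>UNIV. if \<sigma> u = \<omega> then 1 else 0)"
    using assms(1) by (simp add: card_filter_eq_sum, subst sum.swap, simp)
  also have "\<dots> = real (card U)" by simp
  finally show ?thesis
    using assms by (simp add: emp_def flip: sum_divide_distrib)
qed

lemma emp_le_1: "finite U \<Longrightarrow> emp \<sigma> U \<omega> \<le> 1"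
  unfolding emp_def by (cases "U = {}") (auto simp: card_mono divide_le_eq_1)

lemma abs_diff_le_tv: "\<bar>p \<omega> - q \<omega>\<bar> \<le> 2 * tv p q"
  unfolding tv_def by (simp, intro member_le_sum) auto

lemma tv_nonneg: "0 \<le> tv p q"
  unfolding tv_def by (simp add: sum_nonneg)

lemma tv_le_1:
  assumes "\<And>\<omega>. 0 \<le> p \<omega>" "\<And>\<omega>. 0 \<le> q \<omega>" "sum p UNIV = 1" "sum q UNIV = 1"
  shows "tv p q \<le> 1"
proof -
  have "(\<Sum>\<omega>\<in>UNIV. \<bar>p \<omega> - q \<omega>\<bar>) \<le> (\<Sum>\<omega>\<in>UNIV. p \<omega> + q \<omega>)"
    using assms by (intro sum_mono) (simp add: abs_le_iff)
  also have "\<dots> = 2" using assms by (simp add: sum.distrib)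
  finally show ?thesis by (simp add: tv_def)
qed

lemma is_prob_cond:
  assumes "is_prob n \<mu>" "meas n \<mu> T > 0"
  shows "is_prob n (cond n \<mu> T)"
proof -
  have "(\<Sum>\<sigma>\<in>configs n. cond n \<mu> T \<sigma>) = (\<Sum>\<sigma>\<in>configs n \<inter> T. \<mu> \<sigma> / meas n \<mu> T)"
    unfolding cond_def by (simp add: sum.inter_restrict[OF finite_configs])
  also have "\<dots> = 1"
    using assms(2) by (simp add: meas_def flip: sum_divide_distrib)
  finally show ?thesis
    using assms unfolding is_prob_def cond_def by auto
qed

lemma cond_eq_0: "\<sigma> \<notin> T \<Longrightarrow> cond n \<mu> T \<sigma> = 0"
  unfolding cond_def by simp

lemma
  assumes "is_partition A P" "i < length P"
  shows partition_part_nonempty: "P ! i \<noteq> {}"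
    and partition_part_subset: "P ! i \<subseteq> A"
  using assms unfolding is_partition_def by auto

lemma finite_partition_part:
  fixes V :: "nat set list"
  shows "is_partition {0..<n} V \<Longrightarrow> i < length V \<Longrightarrow> finite (V ! i)"
  by (rule finite_subset[OF partition_part_subset]) auto

lemma sum_card_partition:
  fixes V :: "nat set list"
  assumes "is_partition {0..<n} V"
  shows "(\<Sum>i<length V. real (card (V ! i))) = real n"
proof -
  have "card (\<Union>i<length V. V ! i) = (\<Sum>i<length V. card (V ! i))"
    using assms finite_partition_part
    by (intro card_UN_disjoint) (auto simp: is_partition_def)
  moreover have "(\<Union>i<length V. V ! i) = {0..<n}"
    using assms unfolding is_partition_def by simp
  ultimately show ?thesis by (simp flip: of_nat_sum)
qed

context
  fixes n :: nat and \<nu> :: "(nat \<Rightarrow> 'a::finite) \<Rightarrow> real"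
    and U :: "nat set" and p :: "'a \<Rightarrow> real" and \<xi> :: real
  assumes prob: "is_prob n \<nu>"
    and finite_U: "finite U"
    and regular: "regular_on n \<nu> \<xi> U"
    and close: "\<And>\<tau>. \<tau> \<in> configs n \<Longrightarrow> \<nu> \<tau> \<noteq> 0 \<Longrightarrow> tv (emp \<tau> U) p < \<xi>"
    and p_nonneg: "\<And>\<omega>. 0 \<le> p \<omega>" and p_le_1: "\<And>\<omega>. p \<omega> \<le> 1"
begin

lemma abs_sum_marginal_diff_le:
  assumes "A \<subseteq> U"
  shows "\<bar>\<Sum>x\<in>A. marginal n \<nu> x \<omega> - p \<omega>\<bar> \<le> 4 * \<xi> * real (card U)"
proof (cases "real (card A) \<ge> \<xi> * real (card U)")
  case large: True
  have finite_A: "finite A" using assms finite_U by (rule finite_subset)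
  have count: "real (card {x\<in>A. \<tau> x = \<omega>}) = real (card A) * emp \<tau> A \<omega>" for \<tau> :: "nat \<Rightarrow> 'a"
    using finite_A by (cases "A = {}") (simp_all add: emp_def)
  have "(\<Sum>x\<in>A. marginal n \<nu> x \<omega> - p \<omega>)
      = real (card A) * expect n \<nu> (\<lambda>\<tau>. emp \<tau> A \<omega> - p \<omega>)"
    using finite_A
    by (simp add: sum_subtractf sum_marginal_eq_expect_count count expect_cmult expect_diff
        expect_const[OF prob] right_diff_distrib)
  moreover have "\<bar>expect n \<nu> (\<lambda>\<tau>. emp \<tau> A \<omega> - p \<omega>)\<bar>
      \<le> expect n \<nu> (\<lambda>\<tau>. 2 * tv (emp \<tau> A) (emp \<tau> U) + 2 * \<xi>)"
  proof (rule abs_expect_le[OF prob])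
    fix \<tau> assume "\<tau> \<in> configs n" "\<nu> \<tau> \<noteq> 0"
    then have "tv (emp \<tau> U) p < \<xi>" by (rule close)
    then show "\<bar>emp \<tau> A \<omega> - p \<omega>\<bar> \<le> 2 * tv (emp \<tau> A) (emp \<tau> U) + 2 * \<xi>"
      using abs_diff_le_tv[of "emp \<tau> A" \<omega> "emp \<tau> U"] abs_diff_le_tv[of "emp \<tau> U" \<omega> p]
      by linarith
  qed
  moreover have regular_A: "expect n \<nu> (\<lambda>\<tau>. tv (emp \<tau> A) (emp \<tau> U)) < \<xi>"
    using regular large assms unfolding regular_on_def by blast
  ultimately have "\<bar>\<Sum>x\<in>A. marginal n \<nu> x \<omega> - p \<omega>\<bar> \<le> real (card A) * (4 * \<xi>)"
    by (simp add: abs_mult expect_add expect_cmult expect_const[OF prob] mult_left_mono)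
  also have "\<dots> \<le> real (card U) * (4 * \<xi>)"
  proof (rule mult_right_mono)
    show "real (card A) \<le> real (card U)"
      using assms finite_U by (simp add: card_mono)
    show "0 \<le> 4 * \<xi>"
      using regular_A expect_mono[OF prob, of "\<lambda>_. 0" "\<lambda>\<tau>. tv (emp \<tau> A) (emp \<tau> U)"]
      by (simp add: expect_const[OF prob] tv_nonneg)
  qed
  finally show ?thesis by (simp add: mult_ac)
next
  case small: False
  have "\<bar>\<Sum>x\<in>A. marginal n \<nu> x \<omega> - p \<omega>\<bar> \<le> (\<Sum>x\<in>A. \<bar>marginal n \<nu> x \<omega> - p \<omega>\<bar>)"
    by (rule sum_abs)
  also have "\<dots> \<le> (\<Sum>x\<in>A. 1)"
  proof (rule sum_mono)
    fix x
    show "\<bar>marginal n \<nu> x \<omega> - p \<omega>\<bar> \<le> 1"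
      using marginal_nonneg[OF prob, of x \<omega>] marginal_le_1[OF prob, of x \<omega>] p_nonneg[of \<omega>]
        p_le_1[of \<omega>]
      by linarith
  qed
  also have "\<dots> \<le> \<xi> * real (card U)"
    using small by simp
  also have "\<dots> \<le> 4 * \<xi> * real (card U)"
    using small by linarith
  finally show ?thesis .
qed

lemma sum_abs_marginal_diff_le:
  "(\<Sum>x\<in>U. \<bar>marginal n \<nu> x \<omega> - p \<omega>\<bar>) \<le> 8 * \<xi> * real (card U)"
proof -
  define d where "d x = marginal n \<nu> x \<omega> - p \<omega>" for x
  define P where "P = {x\<in>U. 0 \<le> d x}"
  have "P \<subseteq> U" "U - P \<subseteq> U" unfolding P_def by auto
  have "(\<Sum>x\<in>U. \<bar>d x\<bar>) = (\<Sum>x\<in>U - P. \<bar>d x\<bar>) + (\<Sum>x\<in>P. \<bar>d x\<bar>)"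
    using sum.subset_diff[OF \<open>P \<subseteq> U\<close> finite_U] by simp
  also have "(\<Sum>x\<in>P. \<bar>d x\<bar>) = (\<Sum>x\<in>P. d x)"
    by (rule sum.cong) (auto simp: P_def)
  also have "(\<Sum>x\<in>U - P. \<bar>d x\<bar>) = - (\<Sum>x\<in>U - P. d x)"
    by (simp add: P_def flip: sum_negf, rule sum.cong) auto
  finally have "(\<Sum>x\<in>U. \<bar>d x\<bar>) \<le> \<bar>\<Sum>x\<in>U - P. d x\<bar> + \<bar>\<Sum>x\<in>P. d x\<bar>"
    by linarith
  then show ?thesis
    using abs_sum_marginal_diff_le[OF \<open>P \<subseteq> U\<close>, of \<omega>]
      abs_sum_marginal_diff_le[OF \<open>U - P \<subseteq> U\<close>, of \<omega>]
    unfolding d_def by linarith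
qed

lemma sum_tv_marginal_le:
  "(\<Sum>x\<in>U. tv (marginal n \<nu> x) p) \<le> 4 * real (card (UNIV :: 'a set)) * \<xi> * real (card U)"
proof -
  have "(\<Sum>x\<in>U. tv (marginal n \<nu> x) p) = (\<Sum>\<omega>\<in>UNIV. \<Sum>x\<in>U. \<bar>marginal n \<nu> x \<omega> - p \<omega>\<bar>) / 2"
    unfolding tv_def by (simp add: sum.swap[of _ U] flip: sum_divide_distrib)
  also have "\<dots> \<le> (\<Sum>\<omega>\<in>(UNIV :: 'a set). 8 * \<xi> * real (card U)) / 2"
    by (intro divide_right_mono sum_mono sum_abs_marginal_diff_le) simp
  also have "\<dots> = 4 * real (card (UNIV :: 'a set)) * \<xi> * real (card U)"
    by simp
  finally show ?thesis .
qed

end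

lemma sum_tv_marginal_emp_le:
  fixes \<nu> :: "(nat \<Rightarrow> 'a::finite) \<Rightarrow> real" and V :: "nat set list"
  assumes prob: "is_prob n \<nu>" and partition: "is_partition {0..<n} V"
    and regular: "regular_wrt n \<nu> \<xi> V" and "0 \<le> \<xi>"
    and close: "\<And>i \<tau>. i < length V \<Longrightarrow> \<tau> \<in> configs n \<Longrightarrow> \<nu> \<tau> \<noteq> 0 \<Longrightarrow>
      tv (emp \<tau> (V ! i)) (emp \<sigma> (V ! i)) < \<xi>"
  shows "(\<Sum>i<length V. \<Sum>x\<in>V ! i. tv (marginal n \<nu> x) (emp \<sigma> (V ! i)))
    \<le> (4 * real (card (UNIV :: 'a set)) + 1) * \<xi> * real n"
proof -
  define C where "C = 4 * real (card (UNIV :: 'a set)) * \<xi>"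
  define f where "f i = (\<Sum>x\<in>V ! i. tv (marginal n \<nu> x) (emp \<sigma> (V ! i)))" for i
  define c where "c i = real (card (V ! i))" for i
  obtain J where J: "J \<subseteq> {..<length V}" "(1 - \<xi>) * real n \<le> (\<Sum>i\<in>J. c i)"
    and regular_J: "\<And>i. i \<in> J \<Longrightarrow> regular_on n \<nu> \<xi> (V ! i)"
    using regular unfolding regular_wrt_def c_def by blast
  let ?K = "{..<length V} - J"
  have finite_part: "finite (V ! i)" and nonempty_part: "V ! i \<noteq> {}" if "i < length V" for i
    using that partition finite_partition_part partition_part_nonempty by blast+
  have "f i \<le> C * c i" if "i \<in> J" for i
    using J(1) that unfolding f_def C_def c_def
    by (intro sum_tv_marginal_le[OF prob _ regular_J close] emp_nonneg emp_le_1 finite_part) auto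
  then have "(\<Sum>i\<in>J. f i) \<le> C * (\<Sum>i\<in>J. c i)"
    by (simp add: sum_distrib_left sum_mono)
  moreover have "f i \<le> c i" if "i < length V" for i
    unfolding f_def c_def
    using that
    by (intro sum_bounded_above[where K = 1, simplified] tv_le_1 marginal_nonneg[OF prob]
        emp_nonneg sum_marginal_eq_1[OF prob] sum_emp_eq_1 finite_part nonempty_part)
  then have "(\<Sum>i\<in>?K. f i) \<le> (\<Sum>i\<in>?K. c i)"
    by (intro sum_mono) auto
  ultimately have "(\<Sum>i<length V. f i) \<le> C * (\<Sum>i\<in>J. c i) + (\<Sum>i\<in>?K. c i)"
    using sum.subset_diff[OF J(1), of f] by simp
  also have "\<dots> \<le> C * real n + \<xi> * real n"
  proof -
    have sum_c: "(\<Sum>i\<in>J. c i) + (\<Sum>i\<in>?K. c i) = real n"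
      using sum.subset_diff[OF J(1), of c] sum_card_partition[OF partition] unfolding c_def
      by simp
    moreover have "0 \<le> (\<Sum>i\<in>?K. c i)"
      unfolding c_def by (simp add: sum_nonneg)
    ultimately have "C * (\<Sum>i\<in>J. c i) \<le> C * real n"
      using \<open>0 \<le> \<xi>\<close> unfolding C_def by (intro mult_left_mono) simp_all
    moreover have "(\<Sum>i\<in>?K. c i) \<le> \<xi> * real n"
      using J(2) sum_c by (simp add: algebra_simps)
    ultimately show ?thesis by linarith
  qed
  finally show ?thesis
    unfolding f_def C_def by (simp add: algebra_simps)
qed

lemma sum_tv_marginal_cond_less:
  fixes \<mu> :: "(nat \<Rightarrow> 'a::finite) \<Rightarrow> real" and \<epsilon> :: real
  defines "\<xi> \<equiv> \<epsilon> / (8 * real (card (UNIV :: 'a set)) + 2)"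
  assumes "0 < \<epsilon>" "1 < n" "is_prob n \<mu>" "is_partition {0..<n} V"
    and "homogeneous n \<mu> \<xi> V S" "j < length S" "meas n \<mu> (S ! j) > 0"
    and "regular_wrt n (cond n \<mu> (S ! j)) \<xi> V" "\<sigma> \<in> S ! j"
  shows "(\<Sum>i<length V. \<Sum>x\<in>V ! i. tv (marginal n (cond n \<mu> (S ! j)) x) (emp \<sigma> (V ! i)))
    < \<epsilon> * real n"
proof -
  have close: "tv (emp \<tau> (V ! i)) (emp \<sigma> (V ! i)) < \<xi>"
    if "i < length V" "cond n \<mu> (S ! j) \<tau> \<noteq> 0" for i \<tau>
    using assms that cond_eq_0[of \<tau> "S ! j" n \<mu>] unfolding homogeneous_def by blast
  have "(\<Sum>i<length V. \<Sum>x\<in>V ! i. tv (marginal n (cond n \<mu> (S ! j)) x) (emp \<sigma> (V ! i)))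
      \<le> (4 * real (card (UNIV :: 'a set)) + 1) * \<xi> * real n"
    using assms close by (intro sum_tv_marginal_emp_le is_prob_cond) auto
  also have "\<dots> = \<epsilon> / 2 * real n"
    unfolding \<xi>_def by (simp add: field_simps)
  also have "\<dots> < \<epsilon> * real n"
    using assms by simp
  finally show ?thesis .
qed

theorem lemma8:
  fixes dummy :: "'a::finite itself"
  shows "\<forall>\<epsilon>>0. \<exists>\<xi>>0. \<exists>n0::nat>0. \<forall>n>n0.
    \<forall>(\<mu>::(nat \<Rightarrow> 'a) \<Rightarrow> real) V S j.
      is_prob n \<mu> \<and> is_partition {0..<n} V \<and> is_partition (configs n) S \<and>
      homogeneous n \<mu> \<xi> V S \<and> j < length S \<and> meas n \<mu> (S ! j) > 0 \<and>
      regular_wrt n (cond n \<mu> (S ! j)) \<xi> V \<longrightarrow>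
      (\<forall>\<sigma>\<in>S ! j. (\<Sum>i<length V. \<Sum>x\<in>V ! i.
          tv (marginal n (cond n \<mu> (S ! j)) x) (emp \<sigma> (V ! i))) < \<epsilon> * real n)"
proof -
  have "0 < \<epsilon> / (8 * real (card (UNIV :: 'a set)) + 2)" if "0 < \<epsilon>" for \<epsilon> :: real
    using that by simp
  then show ?thesis
    using sum_tv_marginal_cond_less[where 'a = 'a] zero_less_one by blast
qed

end
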